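(* Let $(Y,X,Z)$ be random variables with $Y$ real-valued with $\mathbb{E}(Y^2)<\infty$, $X\in\{1,\dots,K\}$ a multinomial treatment with marginal probabilities $p_k=\mathbb{P}(X=k)>0$, and $Z$ a confounder. Let $(Y^{(a)},X^{(a)},Z^{(a)})$ and $(Y^{(b)},X^{(b)},Z^{(b)})$ be two independent copies of $(Y,X,Z)$, let $f_0(x,z)=\mathbb{E}(Y\mid X=x,Z=z)$, and define $$e_{\mathrm{orig}}(f_0)=\mathbb{E}\big[(Y^{(a)}-f_0(X^{(a)},Z^{(a)}))^2\big],\qquad e_{\mathrm{switch}}(f_0)=\mathbb{E}\big[(Y^{(a)}-f_0(X^{(b)},Z^{(a)}))^2\big],$$ $$GVIM_X(f_0)=e_{\mathrm{switch}}(f_0)-e_{\mathrm{orig}}(f_0).$$ Assume potential outcomes $Y_1,\dots,Y_K$ exist with consistency ($Y=Y_X$), positivity ($0<\mathbb{P}(X=k\mid Z=z)<1$ for all $k$ and $z$) and conditional ignorability ($(Y_1,\dots,Y_K)\perp X\mid Z$). Then $$GVIM_X(f_0)=\sum_{k\neq j}p_kp_j\,\mathbb{E}_{Z\mid X=k}\Big[\big(\mathbb{E}(Y_k\mid Z)-\mathbb{E}(Y_j\mid Z)\big)^2\Big],$$ where the sum runs over all ordered pairs $(k,j)\in\{1,\dots,K\}^2$ with $k\neq j$, and $\mathbb{E}_{Z\mid X=k}$ denotes expectation over $Z$ drawn from its conditional distribution given $X=k$.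
   Context: The quantity $\mathbb{E}(Y_k\mid Z)-\mathbb{E}(Y_j\mid Z)$ is the conditional average treatment effect (CATE) of treatment level $k$ versus $j$ given $Z$. The "switched" error is obtained by replacing the treatment of one observation with the treatment of an independent copy, keeping the outcome and confounder of the first observation. *)

theory Defs
  imports "HOL-Probability.Probability"
begin

definition sigma_rv :: "'a measure \<Rightarrow> ('a \<Rightarrow> 'b) \<Rightarrow> 'b measure \<Rightarrow> 'a measure" where
  "sigma_rv M V N = vimage_algebra (space M) V N"

definition cond_prob_given :: "'a measure \<Rightarrow> 'a measure \<Rightarrow> 'a set \<Rightarrow> 'a \<Rightarrow> real" where
  "cond_prob_given M F S = real_cond_exp M F (indicator S)"

definition cond_indep_rv ::
  "'a measure \<Rightarrow> 'b measure \<Rightarrow> ('a \<Rightarrow> 'b) \<Rightarrow> 'c measure \<Rightarrow> ('a \<Rightarrow> 'c)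
     \<Rightarrow> 'd measure \<Rightarrow> ('a \<Rightarrow> 'd) \<Rightarrow> bool" where
  "cond_indep_rv M MA A MB B MC C \<longleftrightarrow>
     (\<forall>SA\<in>sets MA. \<forall>SB\<in>sets MB. AE \<omega> in M.
        cond_prob_given M (sigma_rv M C MC) (A -` SA \<inter> B -` SB \<inter> space M) \<omega> =
        cond_prob_given M (sigma_rv M C MC) (A -` SA \<inter> space M) \<omega> *
        cond_prob_given M (sigma_rv M C MC) (B -` SB \<inter> space M) \<omega>)"

end

theory Submission
  imports Defs
begin

(* Write p_k(Z) = P(X = k | Z). For every Z-measurable event B, ignorability and the tower
   property give E[1_B p_k(Z) Y_k] = E[1_B 1_{X=k} Y_k] = E[1_B 1_{X=k} Y], and the tower property
   for f0(X, Z) = E(Y | X, Z) gives E[1_B p_k(Z) f0(k, Z)] = E[1_B 1_{X=k} Y] as well. Since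
   p_k(Z) > 0, this identifies f0(k, Z) with E(Y_k | Z) almost surely.

   Integrating out the independent copy turns the switched error into
   sum_j p_j E[(Y - f0(j, Z))^2]. The residual Y - f0(X, Z) is orthogonal to every square
   integrable function of (X, Z), in particular to 1_{X=k} (f0(k, Z) - f0(j, Z)), so
   E[1_{X=k} (Y - f0(j, Z))^2] = E[1_{X=k} (Y - f0(X, Z))^2] + E[1_{X=k} (f0(k, Z) - f0(j, Z))^2].
   Summed over k and weighted by p_j, the first terms give the original error and the second
   ones are the CATE terms p_k p_j E_{Z|X=k}[(E(Y_k|Z) - E(Y_j|Z))^2], which vanish for j = k. *)

lemma subalgebra_sigma_rv:
  assumes "V \<in> measurable M N"
  shows "subalgebra M (sigma_rv M V N)"
  unfolding subalgebra_def sigma_rv_def using sets_image_in_sets[OF refl assms] by simp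

lemma subalgebra_sigma_rv_comp:
  assumes V: "V \<in> measurable M N" and g: "g \<in> measurable N L"
  shows "subalgebra (sigma_rv M V N) (sigma_rv M (\<lambda>\<omega>. g (V \<omega>)) L)"
proof -
  have "V \<in> measurable (sigma_rv M V N) N"
    unfolding sigma_rv_def by (rule measurable_vimage_algebra1) (use measurable_space[OF V] in auto)
  from measurable_compose[OF this g] show ?thesis
    unfolding subalgebra_def by (simp add: sets_image_in_sets sigma_rv_def)
qed

lemma abs_mult_le_sum_squares: "\<bar>a * b\<bar> \<le> a\<^sup>2 + (b::real)\<^sup>2"
proof -
  have "2 * \<bar>a\<bar> * \<bar>b\<bar> \<le> a\<^sup>2 + b\<^sup>2" using sum_squares_bound[of "\<bar>a\<bar>" "\<bar>b\<bar>"] by simp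
  moreover have "0 \<le> \<bar>a\<bar> * \<bar>b\<bar>" by simp
  ultimately show ?thesis unfolding abs_mult by linarith
qed

lemma power2_diff_le: "(a - b)\<^sup>2 \<le> 2 * a\<^sup>2 + 2 * (b::real)\<^sup>2"
proof -
  have "2 * a\<^sup>2 + 2 * b\<^sup>2 - (a - b)\<^sup>2 = (a + b)\<^sup>2" by (simp add: power2_eq_square algebra_simps)
  then show ?thesis using zero_le_power2[of "a + b"] by linarith
qed

lemma nn_integral_split_finite_range:
  assumes [measurable]: "X \<in> measurable M (count_space UNIV)" "g \<in> borel_measurable M"
    and "finite I" and range: "\<And>\<omega>. \<omega> \<in> space M \<Longrightarrow> X \<omega> \<in> I"
  shows "(\<integral>\<^sup>+\<omega>. g \<omega> \<partial>M) = (\<Sum>k\<in>I. \<integral>\<^sup>+\<omega>. indicator {\<omega>\<in>space M. X \<omega> = k} \<omega> * g \<omega> \<partial>M)"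
proof -
  have "(\<integral>\<^sup>+\<omega>. g \<omega> \<partial>M) = (\<integral>\<^sup>+\<omega>. (\<Sum>k\<in>I. indicator {\<omega>\<in>space M. X \<omega> = k} \<omega> * g \<omega>) \<partial>M)"
  proof (rule nn_integral_cong)
    fix \<omega> assume \<omega>: "\<omega> \<in> space M"
    then have "(\<Sum>k\<in>I. indicator {\<omega>\<in>space M. X \<omega> = k} \<omega> * g \<omega>) = (\<Sum>k\<in>I. if k = X \<omega> then g \<omega> else 0)"
      by (intro sum.cong) (auto simp: indicator_def)
    then show "g \<omega> = (\<Sum>k\<in>I. indicator {\<omega>\<in>space M. X \<omega> = k} \<omega> * g \<omega>)"
      using range[OF \<omega>] \<open>finite I\<close> by simp
  qed
  also have "\<dots> = (\<Sum>k\<in>I. \<integral>\<^sup>+\<omega>. indicator {\<omega>\<in>space M. X \<omega> = k} \<omega> * g \<omega> \<partial>M)"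
    by (rule nn_integral_sum) auto
  finally show ?thesis .
qed

lemma nn_integral_comp_finite_range:
  assumes [measurable]: "X \<in> measurable M (count_space UNIV)"
    and "finite I" and "\<And>\<omega>. \<omega> \<in> space M \<Longrightarrow> X \<omega> \<in> I"
  shows "(\<integral>\<^sup>+\<omega>. c (X \<omega>) \<partial>M) = (\<Sum>k\<in>I. c k * emeasure M {\<omega>\<in>space M. X \<omega> = k})"
proof -
  have "(\<integral>\<^sup>+\<omega>. c (X \<omega>) \<partial>M) = (\<Sum>k\<in>I. \<integral>\<^sup>+\<omega>. indicator {\<omega>\<in>space M. X \<omega> = k} \<omega> * c (X \<omega>) \<partial>M)"
    by (rule nn_integral_split_finite_range) (use assms measurable_compose[OF assms(1) borel_measurable_count_space] in auto)
  also have "\<dots> = (\<Sum>k\<in>I. \<integral>\<^sup>+\<omega>. c k * indicator {\<omega>\<in>space M. X \<omega> = k} \<omega> \<partial>M)"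
    by (intro sum.cong nn_integral_cong) (auto simp: indicator_def)
  also have "\<dots> = (\<Sum>k\<in>I. c k * emeasure M {\<omega>\<in>space M. X \<omega> = k})"
    by (simp add: nn_integral_cmult_indicator)
  finally show ?thesis .
qed

lemma nn_integral_power2_add_orthogonal:
  fixes e d :: "'a \<Rightarrow> real"
  assumes [measurable]: "e \<in> borel_measurable M" "d \<in> borel_measurable M"
    and e2: "integrable M (\<lambda>\<omega>. (e \<omega>)\<^sup>2)"
    and orth: "integrable M (\<lambda>\<omega>. (d \<omega>)\<^sup>2) \<Longrightarrow> (\<integral>\<omega>. e \<omega> * d \<omega> \<partial>M) = 0"
  shows "(\<integral>\<^sup>+\<omega>. (e \<omega> + d \<omega>)\<^sup>2 \<partial>M) = (\<integral>\<^sup>+\<omega>. (e \<omega>)\<^sup>2 \<partial>M) + (\<integral>\<^sup>+\<omega>. (d \<omega>)\<^sup>2 \<partial>M)"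
proof (cases "integrable M (\<lambda>\<omega>. (d \<omega>)\<^sup>2)")
  case True
  have "integrable M (\<lambda>\<omega>. e \<omega> * d \<omega>)"
    by (rule Bochner_Integration.integrable_bound[of _ "\<lambda>\<omega>. (e \<omega>)\<^sup>2 + (d \<omega>)\<^sup>2"])
       (use e2 True abs_mult_le_sum_squares in auto)
  then have int: "integrable M (\<lambda>\<omega>. (e \<omega>)\<^sup>2 + (d \<omega>)\<^sup>2 + 2 * (e \<omega> * d \<omega>))"
    and "(\<integral>\<omega>. (e \<omega>)\<^sup>2 + (d \<omega>)\<^sup>2 + 2 * (e \<omega> * d \<omega>) \<partial>M)
        = (\<integral>\<omega>. (e \<omega>)\<^sup>2 \<partial>M) + (\<integral>\<omega>. (d \<omega>)\<^sup>2 \<partial>M)"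
    using e2 True orth[OF True] by simp_all
  moreover have "(\<lambda>\<omega>. (e \<omega> + d \<omega>)\<^sup>2) = (\<lambda>\<omega>. (e \<omega>)\<^sup>2 + (d \<omega>)\<^sup>2 + 2 * (e \<omega> * d \<omega>))"
    by (simp add: power2_sum fun_eq_iff)
  ultimately have "integrable M (\<lambda>\<omega>. (e \<omega> + d \<omega>)\<^sup>2)"
    and "(\<integral>\<omega>. (e \<omega> + d \<omega>)\<^sup>2 \<partial>M) = (\<integral>\<omega>. (e \<omega>)\<^sup>2 \<partial>M) + (\<integral>\<omega>. (d \<omega>)\<^sup>2 \<partial>M)"
    by simp_all
  then show ?thesis
    using e2 True by (simp add: nn_integral_eq_integral)
next
  case False
  have "\<not> integrable M (\<lambda>\<omega>. (e \<omega> + d \<omega>)\<^sup>2)"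
  proof
    assume "integrable M (\<lambda>\<omega>. (e \<omega> + d \<omega>)\<^sup>2)"
    then have sum_int: "integrable M (\<lambda>\<omega>. 2 * (e \<omega> + d \<omega>)\<^sup>2 + 2 * (e \<omega>)\<^sup>2)" using e2 by simp
    have bound: "(d \<omega>)\<^sup>2 \<le> 2 * (e \<omega> + d \<omega>)\<^sup>2 + 2 * (e \<omega>)\<^sup>2" for \<omega>
      using power2_diff_le[of "e \<omega> + d \<omega>" "e \<omega>"] by simp
    have "integrable M (\<lambda>\<omega>. (d \<omega>)\<^sup>2)"
    proof (rule Bochner_Integration.integrable_bound[OF sum_int])
      show "AE \<omega> in M. norm ((d \<omega>)\<^sup>2) \<le> norm (2 * (e \<omega> + d \<omega>)\<^sup>2 + 2 * (e \<omega>)\<^sup>2)"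
        using bound by (intro AE_I2) (simp add: abs_of_nonneg)
    qed simp
    with False show False by (rule notE)
  qed
  then have "(\<integral>\<^sup>+\<omega>. (e \<omega> + d \<omega>)\<^sup>2 \<partial>M) = \<infinity>" "(\<integral>\<^sup>+\<omega>. (d \<omega>)\<^sup>2 \<partial>M) = \<infinity>"
    using False by (simp_all add: nn_integral_nonneg_infinite[unfolded infinity_ennreal_def])
  then show ?thesis by simp
qed

section \<open>Weighted conditional expectations and conditional independence\<close>

lemma AE_eq_of_weighted_integrals_eq:
  fixes u v w :: "'a \<Rightarrow> real"
  assumes subalg: "subalgebra M F"
    and [measurable]: "u \<in> borel_measurable F" "v \<in> borel_measurable F" "w \<in> borel_measurable M"
    and pos: "AE \<omega> in M. 0 < w \<omega>"
    and "integrable M (\<lambda>\<omega>. w \<omega> * u \<omega>)" "integrable M (\<lambda>\<omega>. w \<omega> * v \<omega>)"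
    and "\<And>B. B \<in> sets F \<Longrightarrow> (\<integral>\<omega>. indicator B \<omega> * w \<omega> * u \<omega> \<partial>M) = (\<integral>\<omega>. indicator B \<omega> * w \<omega> * v \<omega> \<partial>M)"
  shows "AE \<omega> in M. u \<omega> = v \<omega>"
proof -
  have not_less: "AE \<omega> in M. \<not> g \<omega> < f \<omega>"
    if [measurable]: "f \<in> borel_measurable F" "g \<in> borel_measurable F"
      and int: "integrable M (\<lambda>\<omega>. w \<omega> * f \<omega>)" "integrable M (\<lambda>\<omega>. w \<omega> * g \<omega>)"
      and eq: "\<And>B. B \<in> sets F \<Longrightarrow>
        (\<integral>\<omega>. indicator B \<omega> * w \<omega> * f \<omega> \<partial>M) = (\<integral>\<omega>. indicator B \<omega> * w \<omega> * g \<omega> \<partial>M)"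
    for f g
  proof -
    define B where "B = {\<omega>\<in>space M. g \<omega> < f \<omega>}"
    have "B = {\<omega>\<in>space F. g \<omega> < f \<omega>}" using subalg by (simp add: B_def subalgebra_def)
    then have BF: "B \<in> sets F" by simp
    then have [measurable]: "B \<in> sets M" using subalg by (auto simp: subalgebra_def)
    have [measurable]: "f \<in> borel_measurable M" "g \<in> borel_measurable M"
      using subalg by (auto intro: measurable_from_subalg)
    have intB: "integrable M (\<lambda>\<omega>. indicator B \<omega> * (w \<omega> * f \<omega>))" "integrable M (\<lambda>\<omega>. indicator B \<omega> * (w \<omega> * g \<omega>))"
      using integrable_mult_indicator[OF _ int(1)] integrable_mult_indicator[OF _ int(2)] by simp_all
    then have "(\<integral>\<omega>. indicator B \<omega> * (w \<omega> * (f \<omega> - g \<omega>)) \<partial>M) = 0"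
      using eq[OF BF] by (simp add: algebra_simps)
    moreover have "integrable M (\<lambda>\<omega>. indicator B \<omega> * (w \<omega> * (f \<omega> - g \<omega>)))"
      using intB by (simp add: algebra_simps)
    ultimately have "AE \<omega> in M. indicator B \<omega> * (w \<omega> * (f \<omega> - g \<omega>)) = 0"
      using pos by (subst (asm) integral_nonneg_eq_0_iff_AE)
        (auto simp: indicator_def B_def elim!: eventually_mono)
    then show ?thesis
      using pos AE_space by eventually_elim (auto simp: B_def indicator_def)
  qed
  have "AE \<omega> in M. \<not> v \<omega> < u \<omega>" by (rule not_less) (use assms in auto)
  moreover have "AE \<omega> in M. \<not> u \<omega> < v \<omega>" by (rule not_less) (use assms(2-7) assms(8)[symmetric] in auto)
  ultimately show ?thesis by eventually_elim auto
qed

definition cond_indep_event :: "'a measure \<Rightarrow> 'a measure \<Rightarrow> ('a \<Rightarrow> 'b) \<Rightarrow> 'b measure \<Rightarrow> 'a set \<Rightarrow> bool" where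
  "cond_indep_event M F A N E \<longleftrightarrow> (\<forall>S\<in>sets N. AE \<omega> in M.
      real_cond_exp M F (indicator (A -` S \<inter> space M \<inter> E)) \<omega> =
      real_cond_exp M F (indicator (A -` S \<inter> space M)) \<omega> * real_cond_exp M F (indicator E) \<omega>)"

context finite_measure_subalgebra
begin

lemma distr_density_cond_indep:
  assumes [measurable]: "A \<in> measurable M N" "E \<in> sets M" and B: "B \<in> sets F"
    and indep: "cond_indep_event M F A N E"
  shows "distr (density M (\<lambda>\<omega>. ennreal (indicator (B \<inter> E) \<omega>))) N A
       = distr (density M (\<lambda>\<omega>. ennreal (indicator B \<omega> * real_cond_exp M F (indicator E) \<omega>))) N A"
proof (rule measure_eqI)
  fix S assume "S \<in> sets (distr (density M (\<lambda>\<omega>. ennreal (indicator (B \<inter> E) \<omega>))) N A)"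
  then have S[measurable]: "S \<in> sets N" by simp
  define SA where "SA = A -` S \<inter> space M"
  have [measurable]: "SA \<in> sets M" "B \<in> sets M"
    using B subalg by (auto simp: SA_def subalgebra_def)
  have BE: "(\<lambda>\<omega>. indicator B \<omega> * real_cond_exp M F (indicator E) \<omega>) \<in> borel_measurable F"
    using borel_measurable_indicator[OF B] by measurable
  have cond_E_int: "integrable M (real_cond_exp M F (indicator E))"
    by (rule real_cond_exp_int(1)) (simp add: less_top[symmetric])
  have cond_E_nonneg: "AE \<omega> in M. 0 \<le> real_cond_exp M F (indicator E) \<omega>"
    by (rule real_cond_exp_pos) auto
  have emeasure_SA: "emeasure (distr (density M (\<lambda>\<omega>. ennreal (w \<omega>))) N A) S
      = (\<integral>\<^sup>+\<omega>. ennreal (w \<omega> * indicator SA \<omega>) \<partial>M)"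
    if [measurable]: "w \<in> borel_measurable M" "AE \<omega> in M. 0 \<le> w \<omega>" for w
    using that(2)
    by (auto simp: emeasure_distr emeasure_density SA_def[symmetric] ennreal_mult''
        intro!: nn_integral_cong_AE split: split_indicator)
  have "emeasure (distr (density M (\<lambda>\<omega>. ennreal (indicator (B \<inter> E) \<omega>))) N A) S
      = (\<integral>\<^sup>+\<omega>. ennreal (indicator B \<omega> * indicator (SA \<inter> E) \<omega>) \<partial>M)"
    by (simp add: emeasure_SA) (auto intro!: nn_integral_cong simp: indicator_def)
  also have "\<dots> = ennreal (\<integral>\<omega>. indicator B \<omega> * indicator (SA \<inter> E) \<omega> \<partial>M)"
    by (rule nn_integral_eq_integral) (auto intro!: integrable_const_bound[where B=1] simp: indicator_def)
  also have "(\<integral>\<omega>. indicator B \<omega> * indicator (SA \<inter> E) \<omega> \<partial>M)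
      = (\<integral>\<omega>. indicator B \<omega> * real_cond_exp M F (indicator (SA \<inter> E)) \<omega> \<partial>M)"
    by (rule real_cond_exp_intg(2)[OF _ borel_measurable_indicator[OF B], symmetric])
       (auto intro!: integrable_const_bound[where B=1] simp: indicator_def)
  also have "\<dots> = (\<integral>\<omega>. (indicator B \<omega> * real_cond_exp M F (indicator E) \<omega>) * real_cond_exp M F (indicator SA) \<omega> \<partial>M)"
    by (rule integral_cong_AE) (use indep S in \<open>auto simp: cond_indep_event_def SA_def ac_simps elim!: eventually_mono\<close>)
  also have "\<dots> = (\<integral>\<omega>. (indicator B \<omega> * real_cond_exp M F (indicator E) \<omega>) * indicator SA \<omega> \<partial>M)"
    by (rule real_cond_exp_intg(2)[OF _ BE])
       (auto intro!: Bochner_Integration.integrable_bound[OF cond_E_int] simp: indicator_def)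
  also have "ennreal \<dots> = emeasure (distr (density M (\<lambda>\<omega>. ennreal (indicator B \<omega> * real_cond_exp M F (indicator E) \<omega>))) N A) S"
    using cond_E_nonneg
    by (subst emeasure_SA)
       (auto intro!: nn_integral_eq_integral[symmetric] Bochner_Integration.integrable_bound[OF cond_E_int]
          simp: indicator_def elim!: eventually_mono)
  finally show "emeasure (distr (density M (\<lambda>\<omega>. ennreal (indicator (B \<inter> E) \<omega>))) N A) S
      = emeasure (distr (density M (\<lambda>\<omega>. ennreal (indicator B \<omega> * real_cond_exp M F (indicator E) \<omega>))) N A) S" .
qed simp

lemma integral_cond_indep:
  fixes \<psi> :: "'b \<Rightarrow> real"
  assumes [measurable]: "A \<in> measurable M N" "E \<in> sets M" "\<psi> \<in> borel_measurable N"
    and B: "B \<in> sets F" and indep: "cond_indep_event M F A N E"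
  shows "integrable M (\<lambda>\<omega>. indicator (B \<inter> E) \<omega> * \<psi> (A \<omega>)) \<longleftrightarrow>
      integrable M (\<lambda>\<omega>. indicator B \<omega> * real_cond_exp M F (indicator E) \<omega> * \<psi> (A \<omega>))"
    and "(\<integral>\<omega>. indicator (B \<inter> E) \<omega> * \<psi> (A \<omega>) \<partial>M)
      = (\<integral>\<omega>. indicator B \<omega> * real_cond_exp M F (indicator E) \<omega> * \<psi> (A \<omega>) \<partial>M)"
proof -
  have [measurable]: "B \<in> sets M" using B subalg by (auto simp: subalgebra_def)
  have "AE \<omega> in M. 0 \<le> real_cond_exp M F (indicator E) \<omega>"
    by (rule real_cond_exp_pos) auto
  then have nonneg: "AE \<omega> in M. 0 \<le> indicator B \<omega> * real_cond_exp M F (indicator E) \<omega>"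
    by eventually_elim auto
  note eq = distr_density_cond_indep[OF assms(1,2) B indep]
  show "integrable M (\<lambda>\<omega>. indicator (B \<inter> E) \<omega> * \<psi> (A \<omega>)) \<longleftrightarrow>
      integrable M (\<lambda>\<omega>. indicator B \<omega> * real_cond_exp M F (indicator E) \<omega> * \<psi> (A \<omega>))"
    using arg_cong[OF eq, of "\<lambda>\<mu>. integrable \<mu> \<psi>"] nonneg
    by (simp add: integrable_distr_eq integrable_density)
  show "(\<integral>\<omega>. indicator (B \<inter> E) \<omega> * \<psi> (A \<omega>) \<partial>M)
      = (\<integral>\<omega>. indicator B \<omega> * real_cond_exp M F (indicator E) \<omega> * \<psi> (A \<omega>) \<partial>M)"
    using arg_cong[OF eq, of "\<lambda>\<mu>. integral\<^sup>L \<mu> \<psi>"] nonneg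
    by (simp add: integral_distr integral_density)
qed

end

section \<open>Identification of the regression function\<close>

locale gvim_model = prob_space M
  for M :: "'a measure" +
  fixes MZ :: "'z measure" and K :: nat
    and Y :: "'a \<Rightarrow> real" and X :: "'a \<Rightarrow> nat" and Z :: "'a \<Rightarrow> 'z"
    and Ypot :: "nat \<Rightarrow> 'a \<Rightarrow> real"
    and f0 :: "nat \<Rightarrow> 'z \<Rightarrow> real" and m :: "nat \<Rightarrow> 'z \<Rightarrow> real"
  assumes Y_meas[measurable]: "Y \<in> borel_measurable M"
    and Y_sq: "integrable M (\<lambda>\<omega>. (Y \<omega>)\<^sup>2)"
    and X_meas[measurable]: "X \<in> measurable M (count_space UNIV)"
    and X_range: "\<forall>\<omega>\<in>space M. X \<omega> \<in> {1..K}"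
    and Z_meas[measurable]: "Z \<in> measurable M MZ"
    and Ypot_meas: "\<forall>k\<in>{1..K}. Ypot k \<in> borel_measurable M"
    and consistency: "AE \<omega> in M. Y \<omega> = Ypot (X \<omega>) \<omega>"
    and positivity: "\<forall>k\<in>{1..K}. AE \<omega> in M.
           0 < cond_prob_given M (sigma_rv M Z MZ) {\<omega>'\<in>space M. X \<omega>' = k} \<omega>"
    and ignorability: "cond_indep_rv M (PiM {1..K} (\<lambda>_. borel)) (\<lambda>\<omega>. restrict (\<lambda>k. Ypot k \<omega>) {1..K})
                         (count_space UNIV) X MZ Z"
    and f0_meas: "(\<lambda>(x, z). f0 x z) \<in> borel_measurable (count_space UNIV \<Otimes>\<^sub>M MZ)"
    and f0_cond: "AE \<omega> in M. f0 (X \<omega>) (Z \<omega>) =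
           real_cond_exp M (sigma_rv M (\<lambda>\<omega>. (X \<omega>, Z \<omega>)) (count_space UNIV \<Otimes>\<^sub>M MZ)) Y \<omega>"
    and m_meas: "\<forall>k\<in>{1..K}. m k \<in> borel_measurable MZ"
    and m_cond: "\<forall>k\<in>{1..K}. AE \<omega> in M. m k (Z \<omega>) = real_cond_exp M (sigma_rv M Z MZ) (Ypot k) \<omega>"
begin

abbreviation "FZ \<equiv> sigma_rv M Z MZ"
abbreviation "FXZ \<equiv> sigma_rv M (\<lambda>\<omega>. (X \<omega>, Z \<omega>)) (count_space UNIV \<Otimes>\<^sub>M MZ)"
abbreviation "arm k \<equiv> {\<omega>\<in>space M. X \<omega> = k}"
abbreviation "propensity k \<equiv> real_cond_exp M FZ (indicator (arm k))"

lemma XZ_meas[measurable]: "(\<lambda>\<omega>. (X \<omega>, Z \<omega>)) \<in> measurable M (count_space UNIV \<Otimes>\<^sub>M MZ)"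
  by measurable

sublocale FZ: finite_measure_subalgebra M FZ
  by unfold_locales (rule subalgebra_sigma_rv[OF Z_meas])

sublocale FXZ: finite_measure_subalgebra M FXZ
  by unfold_locales (rule subalgebra_sigma_rv[OF XZ_meas])

lemma subalgebra_FXZ_FZ: "subalgebra FXZ FZ"
  using subalgebra_sigma_rv_comp[OF XZ_meas measurable_snd] by simp

lemma space_in_FZ: "space M \<in> sets FZ"
  using sets.top[of FZ] by (simp add: sigma_rv_def)

lemma FZ_in_sets: "B \<in> sets FZ \<Longrightarrow> B \<in> sets M"
  using FZ.subalg by (auto simp: subalgebra_def)

lemma FZ_in_FXZ: "B \<in> sets FZ \<Longrightarrow> B \<in> sets FXZ"
  using subalgebra_FXZ_FZ by (auto simp: subalgebra_def)

lemma Z_meas_FZ[measurable]: "Z \<in> measurable FZ MZ"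
  unfolding sigma_rv_def by (rule measurable_vimage_algebra1) (use measurable_space[OF Z_meas] in auto)

lemma XZ_meas_FXZ[measurable]: "(\<lambda>\<omega>. (X \<omega>, Z \<omega>)) \<in> measurable FXZ (count_space UNIV \<Otimes>\<^sub>M MZ)"
  unfolding sigma_rv_def by (rule measurable_vimage_algebra1) (use measurable_space[OF XZ_meas] in auto)

lemma f0_arm_meas_MZ[measurable]: "f0 k \<in> borel_measurable MZ"
proof -
  have "(\<lambda>z. (\<lambda>(x, z). f0 x z) (k, z)) \<in> borel_measurable MZ"
    using f0_meas by measurable
  then show ?thesis by simp
qed

lemma f0_arm_meas_FZ: "(\<lambda>\<omega>. f0 k (Z \<omega>)) \<in> borel_measurable FZ"
  by (rule measurable_compose[OF Z_meas_FZ f0_arm_meas_MZ])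

lemma f0_XZ_meas[measurable]: "(\<lambda>\<omega>. f0 (X \<omega>) (Z \<omega>)) \<in> borel_measurable M"
  using measurable_compose[OF XZ_meas f0_meas] by simp

lemma arm_in_FXZ: "arm k \<in> sets FXZ"
proof -
  have "(\<lambda>\<omega>. fst (X \<omega>, Z \<omega>)) \<in> measurable FXZ (count_space UNIV)" by measurable
  then have "{\<omega>\<in>space FXZ. X \<omega> = k} \<in> sets FXZ" by simp
  then show ?thesis by (simp add: sigma_rv_def)
qed

lemma arm_in_sets[measurable]: "arm k \<in> sets M"
  by measurable

lemma Y_integrable: "integrable M Y"
  using square_integrable_imp_integrable[OF Y_meas] Y_sq by simp

lemma f0_XZ_square_integrable: "integrable M (\<lambda>\<omega>. (f0 (X \<omega>) (Z \<omega>))\<^sup>2)"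
proof -
  have "integrable M (\<lambda>\<omega>. (real_cond_exp M FXZ Y \<omega>)\<^sup>2)"
    using FXZ.integrable_convex_cond_exp[of Y UNIV 0 0 power2] Y_integrable Y_sq convex_power2 by simp
  then show ?thesis
    by (rule integrable_cong_AE_imp) (use f0_cond in \<open>auto elim!: eventually_mono\<close>)
qed

lemma f0_XZ_integrable: "integrable M (\<lambda>\<omega>. f0 (X \<omega>) (Z \<omega>))"
  using square_integrable_imp_integrable[OF f0_XZ_meas] f0_XZ_square_integrable by simp

lemma propensity_pos: "k \<in> {1..K} \<Longrightarrow> AE \<omega> in M. 0 < propensity k \<omega>"
  using positivity by (simp add: cond_prob_given_def)

lemma cond_indep_event_Ypot:
  assumes k: "k \<in> {1..K}"
  shows "cond_indep_event M FZ (Ypot k) borel (arm k)"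
  unfolding cond_indep_event_def
proof
  fix S :: "real set" assume S: "S \<in> sets borel"
  let ?V = "\<lambda>\<omega>. restrict (\<lambda>k. Ypot k \<omega>) {1..K}"
  let ?SV = "(\<lambda>y. y k) -` S \<inter> space (PiM {1..K} (\<lambda>_. borel :: real measure))"
  have SV: "?SV \<in> sets (PiM {1..K} (\<lambda>_. borel))"
    by (rule measurable_sets[OF measurable_component_singleton[OF k] S])
  have "AE \<omega> in M. real_cond_exp M FZ (indicator (?V -` ?SV \<inter> X -` {k} \<inter> space M)) \<omega> =
      real_cond_exp M FZ (indicator (?V -` ?SV \<inter> space M)) \<omega> * real_cond_exp M FZ (indicator (X -` {k} \<inter> space M)) \<omega>"
    by (rule bspec[OF bspec[OF ignorability[unfolded cond_indep_rv_def cond_prob_given_def] SV]]) simp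
  moreover have "?V -` ?SV \<inter> X -` {k} \<inter> space M = Ypot k -` S \<inter> space M \<inter> arm k"
    and "?V -` ?SV \<inter> space M = Ypot k -` S \<inter> space M" and "X -` {k} \<inter> space M = arm k"
    using k by (auto simp: space_PiM)
  ultimately show "AE \<omega> in M. real_cond_exp M FZ (indicator (Ypot k -` S \<inter> space M \<inter> arm k)) \<omega> =
      real_cond_exp M FZ (indicator (Ypot k -` S \<inter> space M)) \<omega> * propensity k \<omega>"
    by simp
qed

lemma integrable_propensity_Ypot:
  assumes k: "k \<in> {1..K}"
  shows "integrable M (\<lambda>\<omega>. propensity k \<omega> * Ypot k \<omega>)"
proof -
  have Ypot_k[measurable]: "Ypot k \<in> borel_measurable M" using Ypot_meas k by simp
  have "integrable M (\<lambda>\<omega>. indicator (arm k) \<omega> * Y \<omega>)"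
    using integrable_mult_indicator[OF arm_in_sets Y_integrable] by simp
  then have "integrable M (\<lambda>\<omega>. indicator (space M \<inter> arm k) \<omega> * Ypot k \<omega>)"
    by (rule integrable_cong_AE_imp) (use consistency in \<open>auto simp: indicator_def elim!: eventually_mono\<close>)
  then have "integrable M (\<lambda>\<omega>. indicator (space M) \<omega> * propensity k \<omega> * Ypot k \<omega>)"
    by (rule FZ.integral_cond_indep(1)[OF Ypot_k arm_in_sets measurable_ident_sets[OF refl] space_in_FZ
          cond_indep_event_Ypot[OF k], THEN iffD1])
  then show ?thesis
    by (rule Bochner_Integration.integrable_cong[OF refl, THEN iffD1, rotated]) simp
qed

lemma integral_propensity_Ypot:
  assumes k: "k \<in> {1..K}" and B: "B \<in> sets FZ"
  shows "(\<integral>\<omega>. indicator B \<omega> * propensity k \<omega> * Ypot k \<omega> \<partial>M) = (\<integral>\<omega>. indicator (B \<inter> arm k) \<omega> * Y \<omega> \<partial>M)"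
proof -
  have [measurable]: "B \<in> sets M" using B by (rule FZ_in_sets)
  have Ypot_k[measurable]: "Ypot k \<in> borel_measurable M" using Ypot_meas k by simp
  have "(\<integral>\<omega>. indicator B \<omega> * propensity k \<omega> * Ypot k \<omega> \<partial>M) = (\<integral>\<omega>. indicator (B \<inter> arm k) \<omega> * Ypot k \<omega> \<partial>M)"
    by (rule FZ.integral_cond_indep(2)[OF Ypot_k arm_in_sets measurable_ident_sets[OF refl] B
          cond_indep_event_Ypot[OF k], symmetric])
  also have "\<dots> = (\<integral>\<omega>. indicator (B \<inter> arm k) \<omega> * Y \<omega> \<partial>M)"
    by (rule integral_cong_AE) (use consistency in \<open>auto simp: indicator_def elim!: eventually_mono\<close>)
  finally show ?thesis .
qed

lemma propensity_weighted_m: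
  assumes k: "k \<in> {1..K}"
  shows "integrable M (\<lambda>\<omega>. propensity k \<omega> * m k (Z \<omega>))"
    and "B \<in> sets FZ \<Longrightarrow>
      (\<integral>\<omega>. indicator B \<omega> * propensity k \<omega> * m k (Z \<omega>) \<partial>M) = (\<integral>\<omega>. indicator (B \<inter> arm k) \<omega> * Y \<omega> \<partial>M)"
proof -
  have [measurable]: "Ypot k \<in> borel_measurable M" "m k \<in> borel_measurable MZ" using Ypot_meas m_meas k by auto
  have m_eq: "AE \<omega> in M. w \<omega> * m k (Z \<omega>) = w \<omega> * real_cond_exp M FZ (Ypot k) \<omega>" for w
    using m_cond k by (auto elim!: eventually_mono)
  show "integrable M (\<lambda>\<omega>. propensity k \<omega> * m k (Z \<omega>))"
    using FZ.real_cond_exp_intg(1)[OF integrable_propensity_Ypot[OF k]]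
    by (rule integrable_cong_AE_imp) (use m_eq[of "propensity k"] in \<open>auto elim!: eventually_mono\<close>)
  assume B: "B \<in> sets FZ"
  then have [measurable]: "B \<in> sets M" by (rule FZ_in_sets)
  have int: "integrable M (\<lambda>\<omega>. (indicator B \<omega> * propensity k \<omega>) * Ypot k \<omega>)"
    using integrable_mult_indicator[OF FZ_in_sets[OF B] integrable_propensity_Ypot[OF k]] by (simp add: mult.assoc)
  have "(\<integral>\<omega>. indicator B \<omega> * propensity k \<omega> * m k (Z \<omega>) \<partial>M)
      = (\<integral>\<omega>. (indicator B \<omega> * propensity k \<omega>) * real_cond_exp M FZ (Ypot k) \<omega> \<partial>M)"
    by (rule integral_cong_AE) (use m_eq[of "\<lambda>\<omega>. indicator B \<omega> * propensity k \<omega>"] in \<open>auto simp: mult.assoc\<close>)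
  also have "\<dots> = (\<integral>\<omega>. indicator B \<omega> * propensity k \<omega> * Ypot k \<omega> \<partial>M)"
    by (rule FZ.real_cond_exp_intg(2)[OF int]) (use borel_measurable_indicator[OF B] in \<open>auto intro!: borel_measurable_times\<close>)
  also have "\<dots> = (\<integral>\<omega>. indicator (B \<inter> arm k) \<omega> * Y \<omega> \<partial>M)"
    by (rule integral_propensity_Ypot[OF k B])
  finally show "(\<integral>\<omega>. indicator B \<omega> * propensity k \<omega> * m k (Z \<omega>) \<partial>M) = (\<integral>\<omega>. indicator (B \<inter> arm k) \<omega> * Y \<omega> \<partial>M)" .
qed

lemma propensity_weighted_f0:
  shows "integrable M (\<lambda>\<omega>. propensity k \<omega> * f0 k (Z \<omega>))"
    and "B \<in> sets FZ \<Longrightarrow>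
      (\<integral>\<omega>. indicator B \<omega> * propensity k \<omega> * f0 k (Z \<omega>) \<partial>M) = (\<integral>\<omega>. indicator (B \<inter> arm k) \<omega> * Y \<omega> \<partial>M)"
proof -
  have arm_f0: "indicator (B \<inter> arm k) \<omega> * f0 (X \<omega>) (Z \<omega>) = (indicator B \<omega> * f0 k (Z \<omega>)) * indicator (arm k) \<omega>"
    for B \<omega> by (simp add: indicator_def)
  have int: "integrable M (\<lambda>\<omega>. (indicator B \<omega> * f0 k (Z \<omega>)) * indicator (arm k) \<omega>)" if "B \<in> sets M" for B
    using integrable_mult_indicator[OF _ f0_XZ_integrable, of "B \<inter> arm k"] that by (simp add: arm_f0)
  have "integrable M (\<lambda>\<omega>. (indicator (space M) \<omega> * f0 k (Z \<omega>)) * propensity k \<omega>)"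
    by (rule FZ.real_cond_exp_intg(1)[OF int])
       (use borel_measurable_indicator[OF space_in_FZ] f0_arm_meas_FZ in \<open>auto intro!: borel_measurable_times\<close>)
  then show "integrable M (\<lambda>\<omega>. propensity k \<omega> * f0 k (Z \<omega>))"
    by (rule Bochner_Integration.integrable_cong[OF refl, THEN iffD1, rotated]) simp
  assume B: "B \<in> sets FZ"
  then have [measurable]: "B \<in> sets M" by (rule FZ_in_sets)
  have "(\<integral>\<omega>. indicator B \<omega> * propensity k \<omega> * f0 k (Z \<omega>) \<partial>M)
      = (\<integral>\<omega>. (indicator B \<omega> * f0 k (Z \<omega>)) * propensity k \<omega> \<partial>M)"
    by (simp add: ac_simps)
  also have "\<dots> = (\<integral>\<omega>. indicator (B \<inter> arm k) \<omega> * f0 (X \<omega>) (Z \<omega>) \<partial>M)"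
    unfolding arm_f0
    by (rule FZ.real_cond_exp_intg(2)[OF int])
       (use borel_measurable_indicator[OF B] f0_arm_meas_FZ in \<open>auto intro!: borel_measurable_times\<close>)
  also have "\<dots> = (\<integral>\<omega>. indicator (B \<inter> arm k) \<omega> * real_cond_exp M FXZ Y \<omega> \<partial>M)"
    by (rule integral_cong_AE) (use f0_cond in \<open>auto elim!: eventually_mono\<close>)
  also have "\<dots> = (\<integral>\<omega>. indicator (B \<inter> arm k) \<omega> * Y \<omega> \<partial>M)"
  proof (rule FXZ.real_cond_exp_intg(2))
    show "integrable M (\<lambda>\<omega>. indicator (B \<inter> arm k) \<omega> * Y \<omega>)"
      using integrable_mult_indicator[OF _ Y_integrable, of "B \<inter> arm k"] by simp
    show "indicator (B \<inter> arm k) \<in> borel_measurable FXZ"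
      using FZ_in_FXZ[OF B] arm_in_FXZ by (intro borel_measurable_indicator) auto
  qed simp
  finally show "(\<integral>\<omega>. indicator B \<omega> * propensity k \<omega> * f0 k (Z \<omega>) \<partial>M) = (\<integral>\<omega>. indicator (B \<inter> arm k) \<omega> * Y \<omega> \<partial>M)" .
qed

lemma f0_eq_m: "k \<in> {1..K} \<Longrightarrow> AE \<omega> in M. f0 k (Z \<omega>) = m k (Z \<omega>)"
  using m_meas by (intro AE_eq_of_weighted_integrals_eq[OF FZ.subalg _ _ _ propensity_pos])
    (auto simp: propensity_weighted_f0 propensity_weighted_m intro: measurable_compose[OF Z_meas_FZ])

section \<open>Decomposition of the switched error\<close>

lemma residual_square_integrable: "integrable M (\<lambda>\<omega>. (Y \<omega> - f0 (X \<omega>) (Z \<omega>))\<^sup>2)"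
proof (rule Bochner_Integration.integrable_bound[of _ "\<lambda>\<omega>. 2 * (Y \<omega>)\<^sup>2 + 2 * (f0 (X \<omega>) (Z \<omega>))\<^sup>2"])
  show "integrable M (\<lambda>\<omega>. 2 * (Y \<omega>)\<^sup>2 + 2 * (f0 (X \<omega>) (Z \<omega>))\<^sup>2)"
    using Y_sq f0_XZ_square_integrable by simp
  show "AE \<omega> in M. norm ((Y \<omega> - f0 (X \<omega>) (Z \<omega>))\<^sup>2) \<le> norm (2 * (Y \<omega>)\<^sup>2 + 2 * (f0 (X \<omega>) (Z \<omega>))\<^sup>2)"
    using power2_diff_le by (intro AE_I2) simp
qed simp

lemma residual_orthogonal:
  assumes W: "W \<in> borel_measurable FXZ" and W2: "integrable M (\<lambda>\<omega>. (W \<omega>)\<^sup>2)"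
  shows "(\<integral>\<omega>. (Y \<omega> - f0 (X \<omega>) (Z \<omega>)) * W \<omega> \<partial>M) = 0"
proof -
  have [measurable]: "W \<in> borel_measurable M" by (rule measurable_from_subalg[OF FXZ.subalg W])
  have WY: "integrable M (\<lambda>\<omega>. W \<omega> * Y \<omega>)"
    by (rule Bochner_Integration.integrable_bound[of _ "\<lambda>\<omega>. (W \<omega>)\<^sup>2 + (Y \<omega>)\<^sup>2"])
       (use W2 Y_sq abs_mult_le_sum_squares in auto)
  note cond_exp = FXZ.real_cond_exp_intg[OF WY W Y_meas]
  have "(\<integral>\<omega>. (Y \<omega> - f0 (X \<omega>) (Z \<omega>)) * W \<omega> \<partial>M)
      = (\<integral>\<omega>. W \<omega> * Y \<omega> - W \<omega> * real_cond_exp M FXZ Y \<omega> \<partial>M)"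
    by (rule integral_cong_AE) (use f0_cond in \<open>auto simp: algebra_simps elim!: eventually_mono\<close>)
  also have "\<dots> = 0"
    using WY cond_exp by simp
  finally show ?thesis .
qed

lemma arm_error_decomp:
  assumes k: "k \<in> {1..K}" and j: "j \<in> {1..K}"
  shows "(\<integral>\<^sup>+\<omega>. indicator (arm k) \<omega> * ennreal ((Y \<omega> - f0 j (Z \<omega>))\<^sup>2) \<partial>M)
    = (\<integral>\<^sup>+\<omega>. indicator (arm k) \<omega> * ennreal ((Y \<omega> - f0 (X \<omega>) (Z \<omega>))\<^sup>2) \<partial>M)
    + (\<integral>\<^sup>+\<omega>. indicator (arm k) \<omega> * ennreal ((m k (Z \<omega>) - m j (Z \<omega>))\<^sup>2) \<partial>M)"
proof -
  define g where "g p = indicator {k} (fst p) * (f0 k (snd p) - f0 j (snd p))" for p :: "nat \<times> 'z"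
  define e where "e \<omega> = indicator (arm k) \<omega> * (Y \<omega> - f0 (X \<omega>) (Z \<omega>))" for \<omega>
  define d where "d \<omega> = g (X \<omega>, Z \<omega>)" for \<omega>
  have [measurable]: "(\<lambda>p. f0 i (snd p)) \<in> borel_measurable (count_space UNIV \<Otimes>\<^sub>M MZ)" for i
    by (rule measurable_compose[OF measurable_snd f0_arm_meas_MZ])
  have [measurable]: "g \<in> borel_measurable (count_space UNIV \<Otimes>\<^sub>M MZ)"
    unfolding g_def
    by (intro borel_measurable_times borel_measurable_diff measurable_compose[OF measurable_fst borel_measurable_count_space])
       simp_all
  have d_FXZ: "d \<in> borel_measurable FXZ"
    unfolding d_def by (rule measurable_compose[OF XZ_meas_FXZ]) simp
  have [measurable]: "e \<in> borel_measurable M" "d \<in> borel_measurable M"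
    unfolding e_def d_def by measurable
  have "integrable M (\<lambda>\<omega>. (e \<omega>)\<^sup>2)"
    by (rule Bochner_Integration.integrable_bound[OF residual_square_integrable])
       (auto simp: e_def indicator_def)
  moreover have "(\<integral>\<omega>. e \<omega> * d \<omega> \<partial>M) = 0" if "integrable M (\<lambda>\<omega>. (d \<omega>)\<^sup>2)"
  proof -
    have "(\<integral>\<omega>. e \<omega> * d \<omega> \<partial>M) = (\<integral>\<omega>. (Y \<omega> - f0 (X \<omega>) (Z \<omega>)) * d \<omega> \<partial>M)"
      by (rule Bochner_Integration.integral_cong) (auto simp: e_def d_def g_def indicator_def)
    then show ?thesis using residual_orthogonal[OF d_FXZ that] by simp
  qed
  ultimately have "(\<integral>\<^sup>+\<omega>. (e \<omega> + d \<omega>)\<^sup>2 \<partial>M) = (\<integral>\<^sup>+\<omega>. (e \<omega>)\<^sup>2 \<partial>M) + (\<integral>\<^sup>+\<omega>. (d \<omega>)\<^sup>2 \<partial>M)"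
    by (intro nn_integral_power2_add_orthogonal) auto
  moreover have "(\<integral>\<^sup>+\<omega>. (e \<omega> + d \<omega>)\<^sup>2 \<partial>M)
      = (\<integral>\<^sup>+\<omega>. indicator (arm k) \<omega> * ennreal ((Y \<omega> - f0 j (Z \<omega>))\<^sup>2) \<partial>M)"
    by (rule nn_integral_cong) (auto simp: e_def d_def g_def indicator_def)
  moreover have "(\<integral>\<^sup>+\<omega>. (e \<omega>)\<^sup>2 \<partial>M)
      = (\<integral>\<^sup>+\<omega>. indicator (arm k) \<omega> * ennreal ((Y \<omega> - f0 (X \<omega>) (Z \<omega>))\<^sup>2) \<partial>M)"
    by (rule nn_integral_cong) (auto simp: e_def indicator_def)
  moreover have "(\<integral>\<^sup>+\<omega>. (d \<omega>)\<^sup>2 \<partial>M)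
      = (\<integral>\<^sup>+\<omega>. indicator (arm k) \<omega> * ennreal ((m k (Z \<omega>) - m j (Z \<omega>))\<^sup>2) \<partial>M)"
    using f0_eq_m[OF k] f0_eq_m[OF j] AE_space
    by (intro nn_integral_cong_AE, eventually_elim) (auto simp: d_def g_def indicator_def)
  ultimately show ?thesis by simp
qed

lemma nn_integral_split_arms:
  "g \<in> borel_measurable M \<Longrightarrow> (\<integral>\<^sup>+\<omega>. g \<omega> \<partial>M) = (\<Sum>k\<in>{1..K}. \<integral>\<^sup>+\<omega>. indicator (arm k) \<omega> * g \<omega> \<partial>M)"
  by (rule nn_integral_split_finite_range) (use X_range in auto)

lemma sum_arm_prob: "(\<Sum>k\<in>{1..K}. prob (arm k)) = 1"
proof -
  have "(\<integral>\<^sup>+\<omega>. 1 \<partial>M) = (\<Sum>k\<in>{1..K}. 1 * emeasure M (arm k))"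
    by (rule nn_integral_comp_finite_range[where c="\<lambda>_. 1"]) (use X_range in auto)
  then have "ennreal (\<Sum>k\<in>{1..K}. prob (arm k)) = 1"
    by (simp add: emeasure_eq_measure prob_space)
  then show ?thesis by simp
qed

lemma original_error_finite: "(\<integral>\<^sup>+\<omega>. ennreal ((Y \<omega> - f0 (X \<omega>) (Z \<omega>))\<^sup>2) \<partial>M) \<noteq> \<infinity>"
  using nn_integral_eq_integral[OF residual_square_integrable] by simp

lemma switched_error_eq:
  "(\<integral>\<^sup>+ \<omega>. ennreal ((Y (fst \<omega>) - f0 (X (snd \<omega>)) (Z (fst \<omega>)))\<^sup>2) \<partial>(M \<Otimes>\<^sub>M M))
    = (\<Sum>j\<in>{1..K}. ennreal (prob (arm j)) * (\<integral>\<^sup>+\<omega>. ennreal ((Y \<omega> - f0 j (Z \<omega>))\<^sup>2) \<partial>M))"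
proof -
  have [measurable]: "(\<lambda>\<omega>. f0 (X (snd \<omega>)) (Z (fst \<omega>))) \<in> borel_measurable (M \<Otimes>\<^sub>M M)"
    using measurable_compose[OF _ f0_meas, of "\<lambda>\<omega>. (X (snd \<omega>), Z (fst \<omega>))"] by simp
  have "(\<integral>\<^sup>+ \<omega>. ennreal ((Y (fst \<omega>) - f0 (X (snd \<omega>)) (Z (fst \<omega>)))\<^sup>2) \<partial>(M \<Otimes>\<^sub>M M))
      = (\<integral>\<^sup>+ a. \<integral>\<^sup>+ b. ennreal ((Y a - f0 (X b) (Z a))\<^sup>2) \<partial>M \<partial>M)"
    by (subst nn_integral_fst[symmetric]) simp_all
  also have "\<dots> = (\<integral>\<^sup>+ a. (\<Sum>j\<in>{1..K}. ennreal ((Y a - f0 j (Z a))\<^sup>2) * ennreal (prob (arm j))) \<partial>M)"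
    by (intro nn_integral_cong, subst nn_integral_comp_finite_range[OF X_meas finite_atLeastAtMost])
       (use X_range in \<open>auto simp: emeasure_eq_measure\<close>)
  also have "\<dots> = (\<Sum>j\<in>{1..K}. ennreal (prob (arm j)) * (\<integral>\<^sup>+\<omega>. ennreal ((Y \<omega> - f0 j (Z \<omega>))\<^sup>2) \<partial>M))"
    by (subst nn_integral_sum) (auto simp: nn_integral_multc mult.commute)
  finally show ?thesis .
qed

lemma arm_error_total:
  assumes j: "j \<in> {1..K}"
  shows "(\<integral>\<^sup>+\<omega>. ennreal ((Y \<omega> - f0 j (Z \<omega>))\<^sup>2) \<partial>M)
    = (\<integral>\<^sup>+\<omega>. ennreal ((Y \<omega> - f0 (X \<omega>) (Z \<omega>))\<^sup>2) \<partial>M)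
    + (\<Sum>k\<in>{1..K}. \<integral>\<^sup>+\<omega>. indicator (arm k) \<omega> * ennreal ((m k (Z \<omega>) - m j (Z \<omega>))\<^sup>2) \<partial>M)"
proof -
  have "(\<integral>\<^sup>+\<omega>. ennreal ((Y \<omega> - f0 j (Z \<omega>))\<^sup>2) \<partial>M)
      = (\<Sum>k\<in>{1..K}. \<integral>\<^sup>+\<omega>. indicator (arm k) \<omega> * ennreal ((Y \<omega> - f0 j (Z \<omega>))\<^sup>2) \<partial>M)"
    by (rule nn_integral_split_arms) simp
  also have "\<dots> = (\<Sum>k\<in>{1..K}. \<integral>\<^sup>+\<omega>. indicator (arm k) \<omega> * ennreal ((Y \<omega> - f0 (X \<omega>) (Z \<omega>))\<^sup>2) \<partial>M)
    + (\<Sum>k\<in>{1..K}. \<integral>\<^sup>+\<omega>. indicator (arm k) \<omega> * ennreal ((m k (Z \<omega>) - m j (Z \<omega>))\<^sup>2) \<partial>M)"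
    unfolding sum.distrib[symmetric] by (intro sum.cong refl arm_error_decomp j)
  also have "(\<Sum>k\<in>{1..K}. \<integral>\<^sup>+\<omega>. indicator (arm k) \<omega> * ennreal ((Y \<omega> - f0 (X \<omega>) (Z \<omega>))\<^sup>2) \<partial>M)
      = (\<integral>\<^sup>+\<omega>. ennreal ((Y \<omega> - f0 (X \<omega>) (Z \<omega>))\<^sup>2) \<partial>M)"
    by (rule nn_integral_split_arms[symmetric]) simp
  finally show ?thesis .
qed

lemma cate_term_eq:
  assumes pk: "prob (arm k) > 0" and [measurable]: "m k \<in> borel_measurable MZ" "m j \<in> borel_measurable MZ"
  shows "ennreal (prob (arm k) * prob (arm j)) *
      (\<integral>\<^sup>+ z. ennreal ((m k z - m j z)\<^sup>2) \<partial>distr (uniform_measure M (arm k)) MZ Z)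
    = ennreal (prob (arm j)) * (\<integral>\<^sup>+\<omega>. indicator (arm k) \<omega> * ennreal ((m k (Z \<omega>) - m j (Z \<omega>))\<^sup>2) \<partial>M)"
    (is "_ = _ * ?Q")
proof -
  have "Z \<in> measurable (uniform_measure M (arm k)) MZ"
    by (simp add: measurable_cong_sets[OF sets_uniform_measure refl])
  then have "(\<integral>\<^sup>+ z. ennreal ((m k z - m j z)\<^sup>2) \<partial>distr (uniform_measure M (arm k)) MZ Z)
      = ?Q / ennreal (prob (arm k))"
    by (simp add: nn_integral_distr nn_integral_uniform_measure emeasure_eq_measure mult.commute)
  moreover have "ennreal (prob (arm k) * prob (arm j)) * (?Q / ennreal (prob (arm k)))
      = ennreal (prob (arm j)) * (?Q * ennreal (prob (arm k)) / ennreal (prob (arm k)))"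
    by (simp add: ennreal_mult ennreal_times_divide mult_ac)
  moreover have "?Q * ennreal (prob (arm k)) / ennreal (prob (arm k)) = ?Q"
    using pk by (intro ennreal_mult_divide_eq) auto
  ultimately show ?thesis by simp
qed

lemma gvim_eq_weighted_cate_sum:
  assumes p_pos: "\<forall>k\<in>{1..K}. prob (arm k) > 0"
  shows "(\<integral>\<^sup>+ \<omega>. ennreal ((Y (fst \<omega>) - f0 (X (snd \<omega>)) (Z (fst \<omega>)))\<^sup>2) \<partial>(M \<Otimes>\<^sub>M M))
      - (\<integral>\<^sup>+ \<omega>. ennreal ((Y \<omega> - f0 (X \<omega>) (Z \<omega>))\<^sup>2) \<partial>M)
    = (\<Sum>k\<in>{1..K}. \<Sum>j\<in>{1..K} - {k}. ennreal (prob (arm k) * prob (arm j)) *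
        (\<integral>\<^sup>+ z. ennreal ((m k z - m j z)\<^sup>2) \<partial>distr (uniform_measure M (arm k)) MZ Z))"
proof -
  define orig where "orig = (\<integral>\<^sup>+ \<omega>. ennreal ((Y \<omega> - f0 (X \<omega>) (Z \<omega>))\<^sup>2) \<partial>M)"
  define Q where "Q k j = (\<integral>\<^sup>+\<omega>. indicator (arm k) \<omega> * ennreal ((m k (Z \<omega>) - m j (Z \<omega>))\<^sup>2) \<partial>M)" for k j
  have "(\<integral>\<^sup>+ \<omega>. ennreal ((Y (fst \<omega>) - f0 (X (snd \<omega>)) (Z (fst \<omega>)))\<^sup>2) \<partial>(M \<Otimes>\<^sub>M M))
      = (\<Sum>j\<in>{1..K}. ennreal (prob (arm j)) * (orig + (\<Sum>k\<in>{1..K}. Q k j)))"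
    unfolding switched_error_eq orig_def Q_def by (intro sum.cong refl) (simp add: arm_error_total)
  also have "\<dots> = orig + (\<Sum>k\<in>{1..K}. \<Sum>j\<in>{1..K}. ennreal (prob (arm j)) * Q k j)"
    by (simp add: distrib_left sum.distrib sum_distrib_left sum_distrib_right[symmetric]
        sum_arm_prob sum_arm_prob[unfolded One_nat_def]
        sum.swap[of "\<lambda>j k. ennreal (prob (arm j)) * Q k j"])
  finally have "(\<integral>\<^sup>+ \<omega>. ennreal ((Y (fst \<omega>) - f0 (X (snd \<omega>)) (Z (fst \<omega>)))\<^sup>2) \<partial>(M \<Otimes>\<^sub>M M)) - orig
      = (\<Sum>k\<in>{1..K}. \<Sum>j\<in>{1..K}. ennreal (prob (arm j)) * Q k j)"
    using original_error_finite by (simp add: orig_def)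
  also have "\<dots> = (\<Sum>k\<in>{1..K}. \<Sum>j\<in>{1..K} - {k}. ennreal (prob (arm j)) * Q k j)"
    by (intro sum.cong refl sum.mono_neutral_right) (auto simp: Q_def)
  also have "\<dots> = (\<Sum>k\<in>{1..K}. \<Sum>j\<in>{1..K} - {k}. ennreal (prob (arm k) * prob (arm j)) *
        (\<integral>\<^sup>+ z. ennreal ((m k z - m j z)\<^sup>2) \<partial>distr (uniform_measure M (arm k)) MZ Z))"
    using p_pos m_meas by (intro sum.cong refl) (simp add: cate_term_eq Q_def)
  finally show ?thesis by (simp add: orig_def)
qed

end

theorem theorem1:
  fixes M :: "'a measure" and MZ :: "'z measure" and K :: nat
    and Y :: "'a \<Rightarrow> real" and X :: "'a \<Rightarrow> nat" and Z :: "'a \<Rightarrow> 'z"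
    and Ypot :: "nat \<Rightarrow> 'a \<Rightarrow> real"
    and f0 :: "nat \<Rightarrow> 'z \<Rightarrow> real" and m :: "nat \<Rightarrow> 'z \<Rightarrow> real"
  assumes P: "prob_space M"
    and Y_meas: "Y \<in> borel_measurable M"
    and Y_sq: "integrable M (\<lambda>\<omega>. (Y \<omega>)\<^sup>2)"
    and X_meas: "X \<in> measurable M (count_space UNIV)"
    and X_range: "\<forall>\<omega>\<in>space M. X \<omega> \<in> {1..K}"
    and p_pos: "\<forall>k\<in>{1..K}. measure M {\<omega>\<in>space M. X \<omega> = k} > 0"
    and Z_meas: "Z \<in> measurable M MZ"
    and Ypot_meas: "\<forall>k\<in>{1..K}. Ypot k \<in> borel_measurable M"
    and consistency: "AE \<omega> in M. Y \<omega> = Ypot (X \<omega>) \<omega>"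
    and positivity: "\<forall>k\<in>{1..K}. AE \<omega> in M.
           0 < cond_prob_given M (sigma_rv M Z MZ) {\<omega>'\<in>space M. X \<omega>' = k} \<omega> \<and>
           cond_prob_given M (sigma_rv M Z MZ) {\<omega>'\<in>space M. X \<omega>' = k} \<omega> < 1"
    and ignorability: "cond_indep_rv M (PiM {1..K} (\<lambda>_. borel)) (\<lambda>\<omega>. restrict (\<lambda>k. Ypot k \<omega>) {1..K})
                         (count_space UNIV) X MZ Z"
    \<comment> \<open>f0 is (a version of) E(Y | X = x, Z = z)\<close>
    and f0_meas: "(\<lambda>(x, z). f0 x z) \<in> borel_measurable (count_space UNIV \<Otimes>\<^sub>M MZ)"
    and f0_cond: "AE \<omega> in M. f0 (X \<omega>) (Z \<omega>) =
           real_cond_exp M (sigma_rv M (\<lambda>\<omega>. (X \<omega>, Z \<omega>)) (count_space UNIV \<Otimes>\<^sub>M MZ)) Y \<omega>"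
    \<comment> \<open>m k is (a version of) z \<mapsto> E(Y_k | Z = z)\<close>
    and m_meas: "\<forall>k\<in>{1..K}. m k \<in> borel_measurable MZ"
    and m_cond: "\<forall>k\<in>{1..K}. AE \<omega> in M. m k (Z \<omega>) = real_cond_exp M (sigma_rv M Z MZ) (Ypot k) \<omega>"
  shows "(\<integral>\<^sup>+ \<omega>. ennreal ((Y (fst \<omega>) - f0 (X (snd \<omega>)) (Z (fst \<omega>)))\<^sup>2) \<partial>(M \<Otimes>\<^sub>M M))
         - (\<integral>\<^sup>+ \<omega>. ennreal ((Y \<omega> - f0 (X \<omega>) (Z \<omega>))\<^sup>2) \<partial>M)
       = (\<Sum>k\<in>{1..K}. \<Sum>j\<in>{1..K} - {k}.
            ennreal (measure M {\<omega>\<in>space M. X \<omega> = k} * measure M {\<omega>\<in>space M. X \<omega> = j}) *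
            (\<integral>\<^sup>+ z. ennreal ((m k z - m j z)\<^sup>2)
               \<partial>(distr (uniform_measure M {\<omega>\<in>space M. X \<omega> = k}) MZ Z)))"
proof -
  have "\<forall>k\<in>{1..K}. AE \<omega> in M. 0 < cond_prob_given M (sigma_rv M Z MZ) {\<omega>'\<in>space M. X \<omega>' = k} \<omega>"
    using positivity by (auto elim: eventually_mono)
  then interpret gvim_model M MZ K Y X Z Ypot f0 m
    unfolding gvim_model_def gvim_model_axioms_def using assms by blast
  show ?thesis
    using p_pos by (rule gvim_eq_weighted_cate_sum)
qed

end
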